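(* Let $G$ be a finite simple graph that has a $C_3$-free vertex $x$ (i.e. $x$ is non-isolated and lies in no triangle of $G$). Then $G$ is not a universal fixer; that is, there exists a permutation $\pi$ of $V(G)$ such that $\gamma(\pi G)\neq\gamma(G)$.
   Context: For a graph $G$, a set $D\subseteq V(G)$ is dominating if every vertex not in $D$ has a neighbor in $D$; $\gamma(G)$ is the minimum size of a dominating set. Let $G'$ be a disjoint copy of $G$, the copy of $v\in V(G)$ being denoted $v'$. For a bijection $\pi:V(G)\to V(G')$ (equivalently a permutation of $V(G)$), the prism $\pi G$ is the graph with vertex set $V(G)\cup V(G')$ and edge set $E(G)\cup E(G')\cup\{u\pi(u):u\in V(G)\}$. The graph $G$ is a universal fixer if $\gamma(\pi G)=\gamma(G)$ for every bijection $\pi:V(G)\to V(G')$. A non-isolated vertex is $C_3$-free if it belongs to no triangle of $G$. *)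

theory Defs
  imports Main
begin

definition simple_graph :: "'a set \<Rightarrow> ('a \<Rightarrow> 'a \<Rightarrow> bool) \<Rightarrow> bool" where
  "simple_graph V E \<longleftrightarrow> finite V \<and> (\<forall>u v. E u v \<longrightarrow> u \<in> V \<and> v \<in> V)
     \<and> (\<forall>u v. E u v \<longrightarrow> E v u) \<and> (\<forall>v. \<not> E v v)"

definition dominating :: "'a set \<Rightarrow> ('a \<Rightarrow> 'a \<Rightarrow> bool) \<Rightarrow> 'a set \<Rightarrow> bool" where
  "dominating V E D \<longleftrightarrow> D \<subseteq> V \<and> (\<forall>v\<in>V - D. \<exists>u\<in>D. E v u)"

definition domination_number :: "'a set \<Rightarrow> ('a \<Rightarrow> 'a \<Rightarrow> bool) \<Rightarrow> nat" where
  "domination_number V E = Min (card ` {D. dominating V E D})"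

text \<open>The prism \<pi>G: vertices Inl v (the copy G) and Inr v (the copy G', Inr v = v'),
edges of G in both copies plus the matching u -- \<pi>(u)'.\<close>
definition prism_vertices :: "'a set \<Rightarrow> ('a + 'a) set" where
  "prism_vertices V = Inl ` V \<union> Inr ` V"

fun prism_edge :: "('a \<Rightarrow> 'a \<Rightarrow> bool) \<Rightarrow> ('a \<Rightarrow> 'a) \<Rightarrow> ('a + 'a) \<Rightarrow> ('a + 'a) \<Rightarrow> bool" where
  "prism_edge E \<pi> (Inl u) (Inl v) = E u v"
| "prism_edge E \<pi> (Inr u) (Inr v) = E u v"
| "prism_edge E \<pi> (Inl u) (Inr v) = (v = \<pi> u)"
| "prism_edge E \<pi> (Inr v) (Inl u) = (v = \<pi> u)"

definition universal_fixer :: "'a set \<Rightarrow> ('a \<Rightarrow> 'a \<Rightarrow> bool) \<Rightarrow> bool" where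
  "universal_fixer V E \<longleftrightarrow> (\<forall>\<pi>. bij_betw \<pi> V V \<longrightarrow>
     domination_number (prism_vertices V) (prism_edge E \<pi>) = domination_number V E)"

definition C3_free_vertex :: "'a set \<Rightarrow> ('a \<Rightarrow> 'a \<Rightarrow> bool) \<Rightarrow> 'a \<Rightarrow> bool" where
  "C3_free_vertex V E x \<longleftrightarrow> x \<in> V \<and> (\<exists>y. E x y) \<and> (\<nexists>y z. E x y \<and> E y z \<and> E x z)"

end

theory Submission
  imports Defs "HOL-Combinatorics.Cycles"
begin

text \<open>Let \<pi> rotate the closed neighbourhood N[x] along a single cycle and fix all other
vertices. If \<gamma>(\<pi>G) = \<gamma>(G), a minimum dominating set D of \<pi>G yields disjoint sets
A = D \<inter> V(G) and B = {v. \<pi>(v)' \<in> D} whose union is a minimum dominating set of G;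
minimality forbids edges from B into A \<union> B and from \<pi>(A) into \<pi>(A \<union> B).
Because N(x) is independent, a neighbour of a vertex of N(x) other than x lies outside N[x]
and is fixed by \<pi>. With this, each of x \<in> A, x \<in> B and x \<notin> A \<union> B contradicts the
constraints; in the last case the part of N[x] outside A \<union> B is \<pi>-invariant,
hence all of N[x], although x has a neighbour in A.\<close>

lemma simple_graphD:
  assumes "simple_graph V E"
  shows "finite V" and "E u v \<Longrightarrow> u \<in> V" and "E u v \<Longrightarrow> v \<in> V"
    and "E u v \<Longrightarrow> E v u" and "\<not> E v v"
  using assms unfolding simple_graph_def by blast+

lemma finite_dominating_sets:
  assumes "finite V"
  shows "finite {D. dominating V E D}"
  using assms by (rule finite_subset[rotated, OF finite_Pow_iff[THEN iffD2]])
    (auto simp: dominating_def)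

lemma domination_number_le_card:
  assumes "finite V" "dominating V E D"
  shows "domination_number V E \<le> card D"
  using finite_dominating_sets[OF assms(1)] assms(2)
  unfolding domination_number_def by (auto intro!: Min_le)

lemma minimum_dominating_set_exists:
  assumes "finite V"
  obtains D where "dominating V E D" "card D = domination_number V E"
proof -
  have "dominating V E V" by (simp add: dominating_def)
  then have "card ` {D. dominating V E D} \<noteq> {}" by auto
  from Min_in[OF finite_imageI[OF finite_dominating_sets[OF assms]] this] that
  show ?thesis unfolding domination_number_def by auto
qed

lemma minimum_dominating_set_no_edge:
  assumes "finite V" and irrefl: "\<And>v. \<not> E v v"
    and "A \<union> B \<subseteq> V" and "A \<inter> B = {}" and card: "card (A \<union> B) = domination_number V E"
    and dominated: "\<forall>v\<in>V - (A \<union> B). \<exists>a\<in>A. E v a"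
    and "b \<in> B" and "s \<in> A \<union> B"
  shows "\<not> E b s"
proof
  assume "E b s"
  with irrefl have "s \<noteq> b" by metis
  have "dominating V E (A \<union> B - {b})"
    unfolding dominating_def
  proof (intro conjI ballI)
    show "A \<union> B - {b} \<subseteq> V" using \<open>A \<union> B \<subseteq> V\<close> by blast
    fix v assume "v \<in> V - (A \<union> B - {b})"
    then show "\<exists>u\<in>A \<union> B - {b}. E v u"
      using dominated \<open>A \<inter> B = {}\<close> \<open>b \<in> B\<close> \<open>E b s\<close> \<open>s \<noteq> b\<close> \<open>s \<in> A \<union> B\<close> by fastforce
  qed
  then have "card (A \<union> B) \<le> card (A \<union> B - {b})"
    using domination_number_le_card[OF \<open>finite V\<close>] card by simp
  moreover have "card (A \<union> B - {b}) < card (A \<union> B)"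
    using \<open>A \<union> B \<subseteq> V\<close> \<open>finite V\<close> \<open>b \<in> B\<close> by (meson UnI2 card_Diff1_less finite_subset)
  ultimately show False by linarith
qed

lemma prism_dominating_split:
  assumes graph: "simple_graph V E" and bij: "bij_betw p V V"
    and D: "dominating (prism_vertices V) (prism_edge E p) D"
  defines "A \<equiv> {v\<in>V. Inl v \<in> D}" and "B \<equiv> {v\<in>V. Inr (p v) \<in> D}"
  shows "card A + card B \<le> card D"
    and "u \<in> V - (A \<union> B) \<Longrightarrow> \<exists>a\<in>A. E u a"
    and "u \<in> V - (A \<union> B) \<Longrightarrow> \<exists>b\<in>B. E (p u) (p b)"
proof -
  have "finite V" using simple_graphD(1)[OF graph] .
  have inj: "inj_on p V" and onto: "p ` V = V" using bij by (auto simp: bij_betw_def)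
  have "finite D" using D \<open>finite V\<close>
    by (auto simp: dominating_def prism_vertices_def intro: finite_subset)
  have "finite A" "finite B" using \<open>finite V\<close> by (auto simp: A_def B_def)
  have "card (Inl ` A \<union> Inr ` p ` B) = card A + card B"
    using \<open>finite A\<close> \<open>finite B\<close> inj_on_subset[OF inj, of B]
    by (subst card_Un_disjoint) (auto simp: card_image B_def)
  moreover have "Inl ` A \<union> Inr ` p ` B \<subseteq> D" by (auto simp: A_def B_def)
  ultimately show "card A + card B \<le> card D" by (metis card_mono[OF \<open>finite D\<close>])
  show "\<exists>a\<in>A. E u a" if u: "u \<in> V - (A \<union> B)"
  proof -
    from u have "Inl u \<in> prism_vertices V - D" by (auto simp: prism_vertices_def A_def)
    then obtain d where "d \<in> D" "prism_edge E p (Inl u) d" using D unfolding dominating_def by blast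
    with u show ?thesis using simple_graphD(3)[OF graph] by (cases d) (auto simp: A_def B_def)
  qed
  show "\<exists>b\<in>B. E (p u) (p b)" if u: "u \<in> V - (A \<union> B)"
  proof -
    from u have "Inr (p u) \<in> prism_vertices V - D" using onto by (auto simp: prism_vertices_def B_def)
    then obtain d where d: "d \<in> D" "prism_edge E p (Inr (p u)) d"
      using D unfolding dominating_def by blast
    show ?thesis
    proof (cases d)
      case (Inl a)
      with d D have "a \<in> V" "p u = p a" by (auto simp: dominating_def prism_vertices_def)
      with u inj have "a = u" by (auto dest: inj_onD)
      with d Inl u show ?thesis by (auto simp: A_def)
    next
      case (Inr v)
      with d have "v \<in> V" using simple_graphD(3)[OF graph] by auto
      with onto obtain b where "b \<in> V" "v = p b" by auto
      with d Inr show ?thesis by (auto simp: B_def)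
    qed
  qed
qed

text \<open>The constraints a minimum dominating set of \<pi>G imposes when \<gamma>(\<pi>G) = \<gamma>(G):
A = D \<inter> V(G) and B = {v. \<pi>(v)' \<in> D}.\<close>
definition fixing_pair ::
  "'a set \<Rightarrow> ('a \<Rightarrow> 'a \<Rightarrow> bool) \<Rightarrow> ('a \<Rightarrow> 'a) \<Rightarrow> 'a set \<Rightarrow> 'a set \<Rightarrow> bool" where
  "fixing_pair V E p A B \<longleftrightarrow> A \<subseteq> V \<and> B \<subseteq> V \<and> A \<inter> B = {}
     \<and> (\<forall>u\<in>V - (A \<union> B). (\<exists>a\<in>A. E u a) \<and> (\<exists>b\<in>B. E (p u) (p b)))
     \<and> (\<forall>b\<in>B. \<forall>s\<in>A \<union> B. \<not> E b s)
     \<and> (\<forall>a\<in>A. \<forall>s\<in>A \<union> B. \<not> E (p a) (p s))"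

lemma fixing_pair_if_prism_domination_eq:
  assumes graph: "simple_graph V E" and bij: "bij_betw p V V"
    and eq: "domination_number (prism_vertices V) (prism_edge E p) = domination_number V E"
  obtains A B where "fixing_pair V E p A B"
proof -
  have "finite V" and irrefl: "\<And>v. \<not> E v v" using simple_graphD[OF graph] by auto
  have inj: "inj_on p V" and onto: "p ` V = V" using bij by (auto simp: bij_betw_def)
  define \<gamma> where "\<gamma> = domination_number V E"
  have "finite (prism_vertices V)" using \<open>finite V\<close> by (simp add: prism_vertices_def)
  then obtain D where D: "dominating (prism_vertices V) (prism_edge E p) D" "card D = \<gamma>"
    using minimum_dominating_set_exists eq unfolding \<gamma>_def by metis
  define A where "A = {v\<in>V. Inl v \<in> D}"
  define B where "B = {v\<in>V. Inr (p v) \<in> D}"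
  note split = prism_dominating_split[OF graph bij D(1), folded A_def B_def]
  have "A \<union> B \<subseteq> V" "finite A" "finite B" using \<open>finite V\<close> by (auto simp: A_def B_def)
  have "dominating V E (A \<union> B)" using split(2) \<open>A \<union> B \<subseteq> V\<close> by (auto simp: dominating_def)
  then have "\<gamma> \<le> card (A \<union> B)" using domination_number_le_card[OF \<open>finite V\<close>] by (simp add: \<gamma>_def)
  moreover have "card (A \<union> B) + card (A \<inter> B) = card A + card B"
    using card_Un_Int[OF \<open>finite A\<close> \<open>finite B\<close>] by simp
  ultimately have "card (A \<inter> B) = 0" and card: "card (A \<union> B) = \<gamma>" using split(1) D(2) by linarith+
  then have disj: "A \<inter> B = {}" using \<open>finite A\<close> by simp
  have "\<not> E b s" if "b \<in> B" "s \<in> A \<union> B" for b s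
    using minimum_dominating_set_no_edge[of V E, OF \<open>finite V\<close> irrefl \<open>A \<union> B \<subseteq> V\<close> disj] card split(2) that
    by (simp add: \<gamma>_def)
  moreover have "\<not> E (p a) (p s)" if "a \<in> A" "s \<in> A \<union> B" for a s
  proof (rule minimum_dominating_set_no_edge[of V E, OF \<open>finite V\<close> irrefl])
    have inj_AB: "inj_on p (A \<union> B)" using inj_on_subset[OF inj \<open>A \<union> B \<subseteq> V\<close>] .
    show "p ` B \<union> p ` A \<subseteq> V" using \<open>A \<union> B \<subseteq> V\<close> onto by auto
    show "p ` B \<inter> p ` A = {}" using inj_AB disj by (auto dest: inj_onD)
    show "card (p ` B \<union> p ` A) = domination_number V E"
      using card card_image[OF inj_AB] by (simp add: \<gamma>_def image_Un Un_commute)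
    show "\<forall>v\<in>V - (p ` B \<union> p ` A). \<exists>b\<in>p ` B. E v b"
      using split(3) onto by (fastforce simp flip: image_Un)
  qed (use that in auto)
  ultimately have "fixing_pair V E p A B"
    using split(2,3) disj \<open>A \<union> B \<subseteq> V\<close> by (auto simp: fixing_pair_def)
  then show ?thesis by (rule that)
qed

lemma cyclic_permutation_exists:
  assumes "finite C" "x \<in> C" "y \<in> C" "y \<noteq> x"
  obtains p where "p permutes C" "p x = y" "C \<subseteq> range (\<lambda>n. (p ^^ n) x)"
proof -
  obtain zs where zs: "set zs = C - {x, y}" "distinct zs"
    using finite_distinct_list[of "C - {x, y}"] \<open>finite C\<close> by blast
  define cs where "cs = x # y # zs"
  have "distinct cs" "set cs = C" using zs assms by (auto simp: cs_def)
  define p where "p = cycle_of_list cs"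
  have iterate: "(p ^^ i) x = cs ! i" if "i < length cs" for i
  proof -
    have "(p ^^ i) x = map (p ^^ i) cs ! 0" by (simp add: cs_def)
    also have "\<dots> = rotate i cs ! 0" unfolding p_def using cyclic_rotation[OF \<open>distinct cs\<close>] by simp
    finally show ?thesis using that nth_rotate[of 0 cs i] by (simp add: cs_def)
  qed
  show ?thesis
  proof
    show "p permutes C" using cycle_permutes[of cs] \<open>set cs = C\<close> by (simp add: p_def)
    show "p x = y" using iterate[of 1] by (simp add: cs_def)
    show "C \<subseteq> range (\<lambda>n. (p ^^ n) x)"
      using iterate \<open>set cs = C\<close> by (auto simp: in_set_conv_nth) (metis rangeI)
  qed
qed

definition closed_neighbourhood :: "('a \<Rightarrow> 'a \<Rightarrow> bool) \<Rightarrow> 'a \<Rightarrow> 'a set" where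
  "closed_neighbourhood E x = insert x {v. E x v}"

lemma closed_neighbourhood_subset:
  "simple_graph V E \<Longrightarrow> x \<in> V \<Longrightarrow> closed_neighbourhood E x \<subseteq> V"
  using simple_graphD(3) by (fastforce simp: closed_neighbourhood_def)

locale neighbourhood_cycle =
  fixes V :: "'a set" and E :: "'a \<Rightarrow> 'a \<Rightarrow> bool" and x :: 'a and p :: "'a \<Rightarrow> 'a"
  assumes graph: "simple_graph V E" and C3_free: "C3_free_vertex V E x"
    and permutes: "p permutes closed_neighbourhood E x"
    and edge_to_next: "E x (p x)"
    and single_cycle: "closed_neighbourhood E x \<subseteq> range (\<lambda>n. (p ^^ n) x)"
begin

abbreviation N where "N \<equiv> closed_neighbourhood E x"

lemma edge_sym: "E u v \<Longrightarrow> E v u"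
  by (rule simple_graphD(4)[OF graph])

lemma neighbours_independent: "E x y \<Longrightarrow> E x z \<Longrightarrow> \<not> E y z"
  using C3_free by (auto simp: C3_free_vertex_def)

lemma mem_N: "u \<in> N \<longleftrightarrow> u = x \<or> E x u"
  by (auto simp: closed_neighbourhood_def)

lemma N_subset: "N \<subseteq> V"
  using closed_neighbourhood_subset[OF graph] C3_free by (simp add: C3_free_vertex_def)

lemma p_in_N_iff: "p u \<in> N \<longleftrightarrow> u \<in> N"
  using permutes_in_image[OF permutes] .

lemma p_outside_N: "u \<notin> N \<Longrightarrow> p u = u"
  using permutes_not_in[OF permutes] .

lemma inj_p: "inj p"
  using permutes_inj[OF permutes] .

lemma predecessor:
  obtains w where "E x w" "p w = x"
proof -
  have "x \<in> N" by (simp add: mem_N)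
  then have "inv p x \<in> N" and "p (inv p x) = x"
    using permutes_in_image[OF permutes_inv[OF permutes]] permutes_inverses(1)[OF permutes] by auto
  moreover have "p x \<noteq> x" using edge_to_next simple_graphD(5)[OF graph] by metis
  ultimately have "inv p x \<noteq> x" by auto
  with \<open>inv p x \<in> N\<close> have "E x (inv p x)" by (simp add: mem_N)
  then show ?thesis using \<open>p (inv p x) = x\<close> by (rule that)
qed

lemma invariant_contains_N:
  assumes "x \<in> T" "\<And>u. u \<in> T \<Longrightarrow> p u \<in> T"
  shows "N \<subseteq> T"
proof -
  have "(p ^^ n) x \<in> T" for n by (induction n) (use assms in auto)
  then show ?thesis using single_cycle by auto
qed

end

locale neighbourhood_cycle_fixing_pair = neighbourhood_cycle +
  fixes A B :: "'a set"
  assumes fixing: "fixing_pair V E p A B"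
begin

lemma disjoint: "A \<inter> B = {}"
  using fixing by (simp add: fixing_pair_def)

lemma dominated_by_A: "u \<in> N \<Longrightarrow> u \<notin> A \<union> B \<Longrightarrow> \<exists>a\<in>A. E u a"
  using fixing N_subset by (auto simp: fixing_pair_def)

lemma dominated_by_B: "u \<in> N \<Longrightarrow> u \<notin> A \<union> B \<Longrightarrow> \<exists>b\<in>B. E (p u) (p b)"
  using fixing N_subset by (auto simp: fixing_pair_def)

lemma no_edge_from_B: "b \<in> B \<Longrightarrow> s \<in> A \<union> B \<Longrightarrow> \<not> E b s"
  using fixing by (auto simp: fixing_pair_def)

lemma no_edge_from_image_A: "a \<in> A \<Longrightarrow> s \<in> A \<union> B \<Longrightarrow> \<not> E (p a) (p s)"
  using fixing by (auto simp: fixing_pair_def)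

lemma x_notin_B: "x \<notin> B"
proof
  assume "x \<in> B"
  then have "p x \<notin> A \<union> B" using no_edge_from_B edge_to_next by blast
  moreover have "p x \<in> N" using edge_to_next mem_N by simp
  ultimately obtain a where "a \<in> A" "E (p x) a" using dominated_by_A by blast
  have "a \<noteq> x" using \<open>a \<in> A\<close> \<open>x \<in> B\<close> disjoint by blast
  then have "a \<notin> N"
    using mem_N neighbours_independent[OF edge_to_next] \<open>E (p x) a\<close> by blast
  then have "p a = a" by (rule p_outside_N)
  then show False
    using no_edge_from_image_A[OF \<open>a \<in> A\<close>, of x] \<open>x \<in> B\<close> edge_sym[OF \<open>E (p x) a\<close>] by auto
qed

lemma x_notin_A: "x \<notin> A"
proof
  assume "x \<in> A"
  obtain w where "E x w" "p w = x" by (rule predecessor)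
  consider "w \<in> B" | "w \<in> A" | "w \<notin> A \<union> B" by blast
  then show False
  proof cases
    case 1
    then show False using no_edge_from_B[of w x] \<open>x \<in> A\<close> edge_sym[OF \<open>E x w\<close>] by auto
  next
    case 2
    then show False using no_edge_from_image_A[of w x] \<open>x \<in> A\<close> \<open>p w = x\<close> edge_to_next by auto
  next
    case 3
    then obtain b where "b \<in> B" "E x (p b)"
      using dominated_by_B[of w] \<open>E x w\<close> \<open>p w = x\<close> mem_N by auto
    then have "b \<in> N" using mem_N p_in_N_iff by blast
    moreover have "b \<noteq> x" using \<open>b \<in> B\<close> \<open>x \<in> A\<close> disjoint by blast
    ultimately have "E x b" using mem_N by blast
    then show False using no_edge_from_B[OF \<open>b \<in> B\<close>, of x] \<open>x \<in> A\<close> edge_sym[OF \<open>E x b\<close>] by auto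
  qed
qed

lemma undominated_part_invariant:
  assumes "x \<notin> A \<union> B" "p w = x" "w \<notin> B" and u: "u \<in> N - (A \<union> B)"
  shows "p u \<in> N - (A \<union> B)"
proof (cases "p u = x")
  case False
  have "p u \<in> N" using u p_in_N_iff by blast
  with False have "E x (p u)" by (simp add: mem_N)
  obtain b where "b \<in> B" "E (p u) (p b)" using dominated_by_B u by blast
  have "p b \<noteq> x" using \<open>p w = x\<close> \<open>w \<notin> B\<close> \<open>b \<in> B\<close> inj_p by (metis injD)
  then have "p b \<notin> N"
    using mem_N neighbours_independent[OF \<open>E x (p u)\<close>] \<open>E (p u) (p b)\<close> by blast
  then have "p b = b" using p_in_N_iff p_outside_N by blast
  then have "p u \<notin> A \<union> B" using no_edge_from_B[OF \<open>b \<in> B\<close>, of "p u"] edge_sym[OF \<open>E (p u) (p b)\<close>] by auto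
  then show ?thesis using \<open>p u \<in> N\<close> by blast
qed (use assms mem_N in auto)

lemma x_in_A_or_B: "x \<in> A \<union> B"
proof (rule ccontr)
  assume "x \<notin> A \<union> B"
  then obtain a where "a \<in> A" "E x a" using dominated_by_A[of x] mem_N by blast
  obtain w where "E x w" "p w = x" by (rule predecessor)
  show False
  proof (cases "w \<in> B")
    case True
    have "a \<noteq> w" using True \<open>a \<in> A\<close> disjoint by blast
    then have "p a \<noteq> x" using \<open>p w = x\<close> inj_p by (metis injD)
    moreover have "p a \<in> N" using \<open>E x a\<close> mem_N p_in_N_iff by blast
    ultimately have "E x (p a)" by (simp add: mem_N)
    then show False using no_edge_from_image_A[OF \<open>a \<in> A\<close>, of w] True \<open>p w = x\<close> edge_sym[OF \<open>E x (p a)\<close>] by auto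
  next
    case False
    have "N \<subseteq> N - (A \<union> B)"
    proof (rule invariant_contains_N)
      show "x \<in> N - (A \<union> B)" using \<open>x \<notin> A \<union> B\<close> by (simp add: mem_N)
    qed (rule undominated_part_invariant[OF \<open>x \<notin> A \<union> B\<close> \<open>p w = x\<close> False])
    then show False using \<open>a \<in> A\<close> \<open>E x a\<close> mem_N by blast
  qed
qed

end

lemma (in neighbourhood_cycle) no_fixing_pair: "\<not> fixing_pair V E p A B"
proof
  assume "fixing_pair V E p A B"
  then interpret neighbourhood_cycle_fixing_pair V E x p A B
    by unfold_locales
  show False using x_in_A_or_B x_notin_A x_notin_B by blast
qed

theorem theorem2:
  fixes V :: "'a set" and E :: "'a \<Rightarrow> 'a \<Rightarrow> bool" and x :: 'a
  assumes "simple_graph V E"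
    and "C3_free_vertex V E x"
  shows "\<not> universal_fixer V E"
proof
  assume fixer: "universal_fixer V E"
  obtain y where "E x y" using assms(2) by (auto simp: C3_free_vertex_def)
  have "finite V" using simple_graphD(1)[OF assms(1)] .
  have N_V: "closed_neighbourhood E x \<subseteq> V"
    using closed_neighbourhood_subset[OF assms(1)] assms(2) by (simp add: C3_free_vertex_def)
  moreover have "y \<in> closed_neighbourhood E x" "x \<in> closed_neighbourhood E x" "y \<noteq> x"
    using \<open>E x y\<close> simple_graphD(5)[OF assms(1)] by (auto simp: closed_neighbourhood_def)
  ultimately obtain p where p: "p permutes closed_neighbourhood E x" "p x = y"
      "closed_neighbourhood E x \<subseteq> range (\<lambda>n. (p ^^ n) x)"
    using cyclic_permutation_exists finite_subset[OF N_V \<open>finite V\<close>] by metis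
  interpret neighbourhood_cycle V E x p
    using assms p \<open>E x y\<close> by unfold_locales auto
  have "bij_betw p V V" using permutes_imp_bij[OF permutes_subset[OF p(1) N_V]] .
  moreover from fixer this
  have "domination_number (prism_vertices V) (prism_edge E p) = domination_number V E"
    by (simp add: universal_fixer_def)
  ultimately obtain A B where "fixing_pair V E p A B"
    by (rule fixing_pair_if_prism_domination_eq[OF assms(1)])
  with no_fixing_pair show False by blast
qed

end
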